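(* Let $A$ be a real skew-symmetric $N\times N$ matrix and $B$ a real $N\times r$ matrix such that the pair $(A,B)$ is controllable, and let $K_{(A,B)}$ be the minimal non-negative integer such that $\operatorname{rank}[B,AB,\dots,A^{K_{(A,B)}}B]=N$. Then for every $\rho>0$ there exists $\kappa>0$ such that for every $T\in(0,1]$ and every $\alpha\in L^\infty([0,T],[0,1])$ with $\int_0^T\alpha(t)\,dt\ge\rho T$, $$\int_0^T\alpha(t)\|B^\top e^{tA}z_0\|^2\,dt\ge\kappa\,T^{2K_{(A,B)}+1}\|z_0\|^2\qquad\text{for all }z_0\in\mathbb{R}^N,$$ i.e. $\alpha$ is of class $\mathcal{K}(A,B,T,\kappa T^{2K_{(A,B)}+1})$.
   Context: Norms are Euclidean norms. For $T>0$, $c>0$, a function $\alpha\in L^\infty([0,T],[0,1])$ is of class $\mathcal{K}(A,B,T,c)$ if $\int_0^T\alpha(t)\|B^\top e^{tA}z_0\|^2\,dt\ge c\|z_0\|^2$ for all $z_0\in\mathbb{R}^N$. Controllability of $(A,B)$ means $\operatorname{rank}[B,AB,\dots,A^{N-1}B]=N$. *)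

theory Defs
  imports "HOL-Analysis.Analysis"
begin

definition mat_pow :: "real^'n^'n \<Rightarrow> nat \<Rightarrow> real^'n^'n" where
  "mat_pow A k = ((\<lambda>M. A ** M) ^^ k) (mat 1)"

definition mat_exp :: "real^'n^'n \<Rightarrow> real^'n^'n" where
  "mat_exp M = (\<Sum>k. (1 / (fact k :: real)) *\<^sub>R mat_pow M k)"

(* rank of the block matrix [B, AB, ..., A^K B] = dimension of its column space *)
definition ctrb_rank :: "real^'n^'n \<Rightarrow> real^'r^'n \<Rightarrow> nat \<Rightarrow> nat" where
  "ctrb_rank A B K = dim (span (\<Union>k\<in>{0..K}. columns (mat_pow A k ** B)))"

definition controllable :: "real^'n^'n \<Rightarrow> real^'r^'n \<Rightarrow> bool" where
  "controllable A B \<longleftrightarrow> ctrb_rank A B (CARD('n) - 1) = CARD('n)"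

definition Kalman_index :: "real^'n^'n \<Rightarrow> real^'r^'n \<Rightarrow> nat" where
  "Kalman_index A B = (LEAST K. ctrb_rank A B K = CARD('n))"

(* alpha \<in> L^\<infinity>([0,T],[0,1]) (represented by a measurable representative with values in [0,1]) *)
definition Linf01 :: "real \<Rightarrow> (real \<Rightarrow> real) \<Rightarrow> bool" where
  "Linf01 T \<alpha> \<longleftrightarrow> \<alpha> measurable_on {0..T} \<and> (\<forall>t\<in>{0..T}. 0 \<le> \<alpha> t \<and> \<alpha> t \<le> 1)"

definition class_K :: "real^'n^'n \<Rightarrow> real^'r^'n \<Rightarrow> real \<Rightarrow> real \<Rightarrow> (real \<Rightarrow> real) \<Rightarrow> bool" where
  "class_K A B T c \<alpha> \<longleftrightarrow> Linf01 T \<alpha> \<and>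
     (\<forall>z0::real^'n. integral {0..T} (\<lambda>t. \<alpha> t * (norm (transpose B *v (mat_exp (t *\<^sub>R A) *v z0)))\<^sup>2)
        \<ge> c * (norm z0)\<^sup>2)"

end

theory Submission
  imports Defs "HOL-Computational_Algebra.Polynomial"
begin

text \<open>For skew-symmetric A the flow e^{tA} is orthogonal, and controllability makes
  x \<mapsto> \<Sum>_{k \<le> K, j} |b_j \<bullet> A^k x| a norm, so it dominates c0 |x|. On a window [a, a + \<tau>]
  every observation b_j \<bullet> e^{tA} z is, up to O(\<tau>^{K+1} |z|), a polynomial of degree K in
  (t - a) / \<tau> with coefficients \<tau>^k b_j \<bullet> A^k e^{aA} z / k!. A polynomial that is small at
  K + 1 well separated points has small coefficients, so if |B^T e^{tA} z| < \<eta> \<tau>^K |z| at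
  points of K + 1 non-adjacent cells among P equal cells of the window, the Kalman norm of
  e^{aA} z would be below c0 |z|. Hence at most 2K + 1 cells per window are bad. Cutting
  [0, T] into n windows of length T/n \<le> \<tau>0, the bad cells have total length at most
  (2K + 1) T / P \<le> \<rho> T / 2, while |B^T e^{tA} z|^2 \<ge> \<eta>^2 (T/n)^{2K} |z|^2 elsewhere;
  since \<integral> \<alpha> \<ge> \<rho> T, at least \<rho> T / 2 of the weight of \<alpha> sits on good cells.\<close>

lemma mat_pow_0 [simp]: "mat_pow A 0 = mat 1"
  by (simp add: mat_pow_def)

lemma mat_pow_Suc: "mat_pow A (Suc k) = A ** mat_pow A k"
  by (simp add: mat_pow_def)

lemma scaleR_matrix_mult_assoc: "(c *\<^sub>R A) ** M = c *\<^sub>R (A ** M)" for A :: "real^'m^'n"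
  by (simp add: vec_eq_iff matrix_matrix_mult_def sum_distrib_left mult.assoc)

lemma mat_pow_scaleR: "mat_pow (t *\<^sub>R A) k = (t ^ k) *\<^sub>R mat_pow A k"
  by (induction k) (simp_all add: mat_pow_Suc matrix_scalar_ac scaleR_matrix_mult_assoc mult.commute)

lemma mat_pow_Suc_mult_vector: "mat_pow A (Suc k) *v v = A *v (mat_pow A k *v v)"
  by (simp add: mat_pow_Suc matrix_vector_mul_assoc)

lemma mat_pow_mult_vector_commute: "mat_pow A k *v (A *v v) = A *v (mat_pow A k *v v)"
  by (induction k) (simp_all add: mat_pow_Suc_mult_vector)

lemma mat_pow_Suc_mult_vector': "mat_pow A (Suc k) *v v = mat_pow A k *v (A *v v)"
  by (simp add: mat_pow_Suc_mult_vector mat_pow_mult_vector_commute)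

lemma mat_pow_mult_vector_eq_iterate: "mat_pow A k *v v = (((*v) A) ^^ k) v"
  by (induction k) (simp_all add: mat_pow_Suc_mult_vector)

lemma bounded_linear_matrix_mult_left: "bounded_linear (\<lambda>M::real^'m^'n. A ** M)"
  unfolding linear_conv_bounded_linear[symmetric]
  by (rule linearI) (simp_all add: matrix_add_ldistrib matrix_scalar_ac scaleR_matrix_mult_assoc)

lemma bounded_linear_mult_vector_left: "bounded_linear (\<lambda>M::real^'m^'n. M *v v)"
  unfolding linear_conv_bounded_linear[symmetric]
  by (rule linearI) (simp_all add: matrix_vector_mult_add_rdistrib scaleR_matrix_vector_assoc)

lemma summable_exp_series_iterate:
  fixes f :: "'a::banach \<Rightarrow> 'a"
  assumes "bounded_linear f"
  shows "summable (\<lambda>k. (t ^ k / fact k) *\<^sub>R (f ^^ k) x)"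
proof -
  obtain c where c: "c > 0" "\<And>y. norm (f y) \<le> norm y * c"
    using bounded_linear.pos_bounded[OF assms] by blast
  have iter: "norm ((f ^^ k) x) \<le> c ^ k * norm x" for k
  proof (induction k)
    case (Suc k)
    have "norm ((f ^^ Suc k) x) \<le> norm ((f ^^ k) x) * c" using c(2) by simp
    also have "\<dots> \<le> c ^ k * norm x * c" using Suc c(1) by (simp add: mult_right_mono)
    finally show ?case by (simp add: algebra_simps)
  qed simp
  show ?thesis
  proof (rule summable_comparison_test)
    show "\<exists>N. \<forall>k\<ge>N. norm ((t ^ k / fact k) *\<^sub>R (f ^^ k) x) \<le> norm x * (inverse (fact k) * (\<bar>t\<bar> * c) ^ k)"
    proof (intro exI allI impI)
      fix k
      have "norm ((t ^ k / fact k) *\<^sub>R (f ^^ k) x) \<le> \<bar>t\<bar> ^ k / fact k * (c ^ k * norm x)"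
        using iter by (simp add: power_abs mult_left_mono divide_right_mono)
      then show "norm ((t ^ k / fact k) *\<^sub>R (f ^^ k) x) \<le> norm x * (inverse (fact k) * (\<bar>t\<bar> * c) ^ k)"
        by (simp add: power_mult_distrib field_simps)
    qed
    show "summable (\<lambda>k. norm x * (inverse (fact k) * (\<bar>t\<bar> * c) ^ k))"
      by (intro summable_mult summable_exp)
  qed
qed

text \<open>e^{tA} z as a vector series, which is easier to differentiate termwise than the
  matrix series defining mat_exp (see mat_exp_mult_vector).\<close>
definition flow :: "real^'n^'n \<Rightarrow> real^'n \<Rightarrow> real \<Rightarrow> real^'n" where
  "flow A z t = (\<Sum>k. (t ^ k / fact k) *\<^sub>R (mat_pow A k *v z))"

lemma summable_flow: "summable (\<lambda>k. (t ^ k / fact k) *\<^sub>R (mat_pow A k *v z))"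
  unfolding mat_pow_mult_vector_eq_iterate
  by (rule summable_exp_series_iterate[OF matrix_vector_mul_bounded_linear])

lemma mat_exp_mult_vector: "mat_exp (t *\<^sub>R A) *v z = flow A z t"
proof -
  have "summable (\<lambda>k. (t ^ k / fact k) *\<^sub>R mat_pow A k)"
    unfolding mat_pow_def by (rule summable_exp_series_iterate[OF bounded_linear_matrix_mult_left])
  then have "mat_exp (t *\<^sub>R A) *v z = (\<Sum>k. ((t ^ k / fact k) *\<^sub>R mat_pow A k) *v z)"
    unfolding mat_exp_def mat_pow_scaleR
    by (simp add: bounded_linear.suminf[OF bounded_linear_mult_vector_left])
  then show ?thesis
    by (simp add: flow_def scaleR_matrix_vector_assoc)
qed

lemma flow_0 [simp]: "flow A z 0 = z"
proof -
  have "(\<lambda>k. (0 ^ k / fact k) *\<^sub>R (mat_pow A k *v z)) = (\<lambda>k. if k = 0 then z else 0)"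
    by (simp add: fun_eq_iff)
  then show ?thesis
    using sums_single[of 0 "\<lambda>_. z"] by (simp add: flow_def sums_iff)
qed

lemma flow_mult_vector: "flow A (A *v z) t = A *v flow A z t"
proof -
  have "A *v flow A z t = (\<Sum>k. A *v ((t ^ k / fact k) *\<^sub>R (mat_pow A k *v z)))"
    unfolding flow_def by (rule bounded_linear.suminf[OF matrix_vector_mul_bounded_linear summable_flow])
  then show ?thesis
    by (simp add: flow_def mat_pow_mult_vector_commute matrix_vector_mult_scaleR)
qed

lemma flow_mat_pow: "flow A (mat_pow A m *v z) t = mat_pow A m *v flow A z t"
  by (induction m) (simp_all add: mat_pow_Suc_mult_vector flow_mult_vector)

lemma inner_flow_power_series:
  "(\<lambda>k. (w \<bullet> (mat_pow A k *v z)) / fact k * t ^ k) sums (w \<bullet> flow A z t)"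
  using bounded_linear.sums[OF bounded_linear_inner_right[of w] summable_flow[THEN summable_sums]]
  by (simp add: flow_def ac_simps)

lemma has_real_derivative_inner_flow:
  "((\<lambda>t. w \<bullet> flow A z t) has_real_derivative (w \<bullet> flow A (A *v z) t)) (at t)"
proof -
  define c where "c k = (w \<bullet> (mat_pow A k *v z)) / fact k" for k
  have "diffs c = (\<lambda>k. (w \<bullet> (mat_pow A k *v (A *v z))) / fact k)"
    by (simp add: fun_eq_iff diffs_def c_def mat_pow_Suc_mult_vector' del: of_nat_Suc)
  moreover have "((\<lambda>t. \<Sum>k. c k * t ^ k) has_real_derivative (\<Sum>k. diffs c k * t ^ k)) (at t)"
    using inner_flow_power_series[THEN sums_summable]
    by (intro termdiffs_strong_converges_everywhere) (simp add: c_def)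
  moreover have "(\<lambda>t. \<Sum>k. c k * t ^ k) = (\<lambda>t. w \<bullet> flow A z t)"
    unfolding c_def by (rule ext) (rule sums_unique[OF inner_flow_power_series, symmetric])
  moreover have "(\<Sum>k. (w \<bullet> (mat_pow A k *v (A *v z))) / fact k * t ^ k) = w \<bullet> flow A (A *v z) t"
    by (rule sums_unique[OF inner_flow_power_series, symmetric])
  ultimately show ?thesis by simp
qed

lemma continuous_on_inner_flow: "continuous_on S (\<lambda>t. w \<bullet> flow A z t)"
  using has_real_derivative_inner_flow
  by (intro continuous_at_imp_continuous_on ballI DERIV_isCont) blast

lemma matrix_vector_mult_uminus_left: "(- A) *v x = - (A *v x)" for A :: "real^'m^'n"
  by (simp add: vec_eq_iff matrix_vector_mult_def sum_negf)

lemma inner_mult_vector_skew: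
  fixes A :: "real^'n^'n"
  assumes "transpose A = - A"
  shows "x \<bullet> (A *v x) = 0"
proof -
  have "x \<bullet> (A *v x) = (x v* A) \<bullet> x"
    by (rule dot_lmul_matrix[symmetric])
  also have "\<dots> = (transpose A *v x) \<bullet> x"
    by (simp add: transpose_matrix_vector)
  also have "\<dots> = - (x \<bullet> (A *v x))"
    using assms by (simp add: matrix_vector_mult_uminus_left inner_commute)
  finally show ?thesis by simp
qed

text \<open>The derivative of the squared norm is 2 x \<bullet> A x = 0.\<close>
lemma norm_flow:
  assumes "transpose A = - A"
  shows "norm (flow A z t) = norm z"
proof -
  have coordinate: "((\<lambda>t. flow A z t $ i) has_real_derivative flow A (A *v z) t $ i) (at t)" for i t
    using has_real_derivative_inner_flow[of "axis i 1"] by (simp add: inner_axis')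
  have "((\<lambda>t. \<Sum>i\<in>UNIV. flow A z t $ i * flow A z t $ i) has_real_derivative
      (\<Sum>i\<in>UNIV. flow A (A *v z) t $ i * flow A z t $ i + flow A (A *v z) t $ i * flow A z t $ i)) (at t)" for t
    by (intro DERIV_sum DERIV_mult coordinate)
  moreover have "(\<Sum>i\<in>UNIV. flow A (A *v z) t $ i * flow A z t $ i + flow A (A *v z) t $ i * flow A z t $ i)
      = 2 * (flow A z t \<bullet> (A *v flow A z t))" for t
    by (simp add: inner_vec_def flow_mult_vector sum.distrib[symmetric] sum_distrib_left algebra_simps)
  ultimately have "((\<lambda>t. flow A z t \<bullet> flow A z t) has_real_derivative 0) (at t)" for t
    using inner_mult_vector_skew[OF assms] by (simp add: inner_vec_def)
  then have "flow A z t \<bullet> flow A z t = flow A z 0 \<bullet> flow A z 0"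
    by (intro DERIV_isconst_all) blast
  then show ?thesis by (simp add: norm_eq_sqrt_inner)
qed

lemma inner_flow_taylor_bound:
  fixes A :: "real^'n^'n"
  assumes skew: "transpose A = - A" and h: "0 \<le> h"
  shows "\<bar>w \<bullet> flow A z (a + h) - (\<Sum>k\<le>K. (w \<bullet> (mat_pow A k *v flow A z a)) / fact k * h ^ k)\<bar>
    \<le> h ^ Suc K / fact (Suc K) * (norm w * norm (mat_pow A (Suc K) *v z))"
proof (cases "h = 0")
  case True
  then show ?thesis by (simp add: power_0_left sum.atMost_shift)
next
  case False
  define D where "D m t = w \<bullet> flow A (mat_pow A m *v z) t" for m t
  have "\<forall>m t. m < Suc K \<and> a \<le> t \<and> t \<le> a + h \<longrightarrow> DERIV (D m) t :> D (Suc m) t"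
    unfolding D_def by (auto simp: mat_pow_Suc_mult_vector intro: has_real_derivative_inner_flow)
  then obtain t where taylor:
    "w \<bullet> flow A z (a + h) = (\<Sum>m<Suc K. D m a / fact m * h ^ m) + D (Suc K) t / fact (Suc K) * h ^ Suc K"
    using Taylor_up[of "Suc K" D "\<lambda>t. w \<bullet> flow A z t" a "a + h" a] False h
    by (auto simp: D_def fun_eq_iff)
  moreover have "(\<Sum>m<Suc K. D m a / fact m * h ^ m)
      = (\<Sum>k\<le>K. (w \<bullet> (mat_pow A k *v flow A z a)) / fact k * h ^ k)"
    by (simp add: lessThan_Suc_atMost D_def flow_mat_pow)
  ultimately have "\<bar>w \<bullet> flow A z (a + h) - (\<Sum>k\<le>K. (w \<bullet> (mat_pow A k *v flow A z a)) / fact k * h ^ k)\<bar>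
      = \<bar>D (Suc K) t\<bar> / fact (Suc K) * h ^ Suc K"
    using h by (simp add: abs_mult)
  also have "\<dots> \<le> norm w * norm (mat_pow A (Suc K) *v z) / fact (Suc K) * h ^ Suc K"
    using Cauchy_Schwarz_ineq2[of w "flow A (mat_pow A (Suc K) *v z) t"] h
    by (intro mult_right_mono divide_right_mono) (simp_all add: D_def norm_flow[OF skew])
  finally show ?thesis by (simp add: field_simps)
qed

lemma abs_coeff_le_of_synthetic_div:
  fixes p :: "real poly"
  assumes "\<bar>a\<bar> \<le> 1" "\<And>j. \<bar>coeff (synthetic_div p a) j\<bar> \<le> Q"
  shows "\<bar>coeff p k\<bar> \<le> \<bar>poly p a\<bar> + 2 * Q"
proof -
  let ?q = "synthetic_div p a"
  have "coeff p k = coeff (pCons (poly p a) ?q) k - a * coeff ?q k"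
    using arg_cong[OF synthetic_div_correct[of p a], of "\<lambda>p. coeff p k"] by simp
  moreover have "\<bar>a * coeff ?q k\<bar> \<le> Q"
    using assms mult_mono[of "\<bar>a\<bar>" 1 "\<bar>coeff ?q k\<bar>" Q] by (simp add: abs_mult)
  moreover have "\<bar>coeff (pCons (poly p a) ?q) k\<bar> \<le> \<bar>poly p a\<bar> + Q"
    using assms(2) order.trans[OF abs_ge_zero assms(2)] by (cases k) (auto intro: add_increasing)
  ultimately show ?thesis by linarith
qed

text \<open>Induction on m: divide by x - s 0; the quotient is at most 2 \<epsilon> / \<delta> at the
  remaining points.\<close>
lemma abs_coeff_le_of_separated_values:
  fixes p :: "real poly"
  assumes "degree p \<le> m" "0 < \<delta>" "\<delta> \<le> 1"
    and "\<forall>l\<le>m. 0 \<le> s l \<and> s l \<le> 1" "\<forall>l<m. s l + \<delta> \<le> s (Suc l)"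
    and "\<forall>l\<le>m. \<bar>poly p (s l)\<bar> \<le> \<epsilon>"
  shows "\<bar>coeff p k\<bar> \<le> (5 / \<delta>) ^ m * \<epsilon>"
  using assms
proof (induction m arbitrary: p s \<epsilon> k)
  case 0
  then have deg: "degree p = 0" by simp
  then have "poly p (s 0) = coeff p 0"
    by (subst degree_0_id[OF deg, symmetric]) simp
  then show ?case
    using "0.prems"(6) coeff_eq_0[of p k] deg by (cases "k = 0") auto
next
  case (Suc m)
  note prems = Suc.prems
  let ?a = "s 0" and ?q = "synthetic_div p (s 0)"
  have \<epsilon>: "0 \<le> \<epsilon>" "\<bar>poly p ?a\<bar> \<le> \<epsilon>"
    using prems(6) by (auto intro: order.trans[OF abs_ge_zero])
  have separated: "?a + \<delta> \<le> s (Suc l)" if "l \<le> m" for l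
    using that
  proof (induction l)
    case (Suc l)
    then have "s 0 + \<delta> \<le> s (Suc l)" by simp
    also have "\<dots> \<le> s (Suc (Suc l))"
      using prems(2) prems(5)[rule_format, of "Suc l"] \<open>Suc l \<le> m\<close> by simp
    finally show ?case .
  qed (use prems(5) in simp)
  have "\<bar>poly ?q (s (Suc l))\<bar> \<le> 2 * \<epsilon> / \<delta>" if "l \<le> m" for l
  proof -
    have "poly p (s (Suc l)) = poly p ?a + (s (Suc l) - ?a) * poly ?q (s (Suc l))"
      using arg_cong[OF synthetic_div_correct'[of ?a p], of "\<lambda>p. poly p (s (Suc l))"]
      by (simp add: algebra_simps)
    moreover have "\<bar>poly p (s (Suc l))\<bar> \<le> \<epsilon>" using prems(6) that by simp
    ultimately have "\<bar>s (Suc l) - ?a\<bar> * \<bar>poly ?q (s (Suc l))\<bar> \<le> 2 * \<epsilon>"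
      using \<epsilon>(2) unfolding abs_mult[symmetric] by linarith
    moreover have "\<delta> \<le> \<bar>s (Suc l) - ?a\<bar>" using separated[OF that] by simp
    ultimately have "\<delta> * \<bar>poly ?q (s (Suc l))\<bar> \<le> 2 * \<epsilon>"
      by (meson abs_ge_zero mult_right_mono order.trans)
    then show ?thesis using prems(2) by (simp add: field_simps)
  qed
  then have "\<bar>coeff ?q j\<bar> \<le> (5 / \<delta>) ^ m * (2 * \<epsilon> / \<delta>)" for j
    using prems(1-5) by (intro Suc.IH[where s="\<lambda>l. s (Suc l)"]) (auto simp: degree_synthetic_div)
  then have "\<bar>coeff p k\<bar> \<le> \<bar>poly p ?a\<bar> + 2 * ((5 / \<delta>) ^ m * (2 * \<epsilon> / \<delta>))"
    using prems(4) by (intro abs_coeff_le_of_synthetic_div) auto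
  moreover have "\<epsilon> \<le> (5 / \<delta>) ^ m * \<epsilon> / \<delta>"
  proof -
    have "1 \<le> 5 / \<delta>" using prems(2,3) by (simp add: le_divide_eq)
    then have "\<delta> \<le> (5 / \<delta>) ^ m" using prems(3) one_le_power[of "5 / \<delta>" m] by linarith
    then have "1 \<le> (5 / \<delta>) ^ m / \<delta>" using prems(2) by (simp add: le_divide_eq)
    from mult_right_mono[OF this \<epsilon>(1)] show ?thesis by simp
  qed
  moreover have "(5 / \<delta>) ^ Suc m * \<epsilon> = 5 * ((5 / \<delta>) ^ m * \<epsilon> / \<delta>)"
    and "2 * ((5 / \<delta>) ^ m * (2 * \<epsilon> / \<delta>)) = 4 * ((5 / \<delta>) ^ m * \<epsilon> / \<delta>)"
    by simp_all
  ultimately show ?case using \<epsilon>(2) by linarith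
qed

lemma abs_coeff_le_of_separated_sums:
  fixes c :: "nat \<Rightarrow> real"
  assumes "0 < \<delta>" "\<delta> \<le> 1"
    and "\<forall>l\<le>m. 0 \<le> s l \<and> s l \<le> 1" "\<forall>l<m. s l + \<delta> \<le> s (Suc l)"
    and "\<forall>l\<le>m. \<bar>\<Sum>i\<le>m. c i * s l ^ i\<bar> \<le> \<epsilon>" "k \<le> m"
  shows "\<bar>c k\<bar> \<le> (5 / \<delta>) ^ m * \<epsilon>"
proof -
  define p where "p = (\<Sum>i\<le>m. monom (c i) i)"
  have "degree p \<le> m"
    unfolding p_def by (intro degree_sum_le) (auto intro: order.trans[OF degree_monom_le])
  moreover have "poly p x = (\<Sum>i\<le>m. c i * x ^ i)" for x
    by (simp add: p_def poly_sum poly_monom)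
  moreover have "coeff p k = c k"
    using assms(6) by (simp add: p_def coeff_sum coeff_monom)
  ultimately show ?thesis
    using abs_coeff_le_of_separated_values[of p m \<delta> s \<epsilon> k] assms by auto
qed

text \<open>The observation w \<bullet> e^{tA} z, rescaled to t = a + \<tau> s, is within \<tau>^{K+1} of a polynomial
  of degree K in s whose coefficients are w \<bullet> A^k e^{aA} z \<tau>^k / k!; smallness at K + 1
  separated instants therefore bounds all these coefficients.\<close>
lemma abs_inner_mat_pow_flow_le_of_samples:
  fixes A :: "real^'n^'n"
  assumes skew: "transpose A = - A"
    and \<delta>: "0 < \<delta>" "\<delta> \<le> 1" and \<tau>: "0 < \<tau>" "\<tau> \<le> 1"
    and s: "\<forall>l\<le>K. 0 \<le> s l \<and> s l \<le> 1" "\<forall>l<K. s l + \<delta> \<le> s (Suc l)"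
    and small: "\<forall>l\<le>K. \<bar>w \<bullet> flow A z (a + \<tau> * s l)\<bar> \<le> \<epsilon> * \<tau> ^ K"
    and "k \<le> K"
  shows "\<bar>w \<bullet> (mat_pow A k *v flow A z a)\<bar>
    \<le> fact K * (5 / \<delta>) ^ K * (\<epsilon> + \<tau> * (norm w * norm (mat_pow A (Suc K) *v z)))"
proof -
  define N where "N = norm w * norm (mat_pow A (Suc K) *v z)"
  define c where "c i = (w \<bullet> (mat_pow A i *v flow A z a)) / fact i * \<tau> ^ i" for i
  have "\<bar>\<Sum>i\<le>K. c i * s l ^ i\<bar> \<le> (\<epsilon> + \<tau> * N) * \<tau> ^ K" if l: "l \<le> K" for l
  proof -
    have h: "0 \<le> \<tau> * s l" "\<tau> * s l \<le> \<tau>" using s(1) l \<tau> by (auto simp: mult_left_le)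
    have "(\<Sum>i\<le>K. (w \<bullet> (mat_pow A i *v flow A z a)) / fact i * (\<tau> * s l) ^ i)
        = (\<Sum>i\<le>K. c i * s l ^ i)"
      by (simp add: c_def power_mult_distrib mult.assoc)
    then have "\<bar>w \<bullet> flow A z (a + \<tau> * s l) - (\<Sum>i\<le>K. c i * s l ^ i)\<bar>
        \<le> (\<tau> * s l) ^ Suc K / fact (Suc K) * N"
      using inner_flow_taylor_bound[OF skew h(1), of w z a K] by (simp add: N_def)
    also have "\<dots> \<le> (\<tau> * s l) ^ Suc K / 1 * N"
      using h(1) fact_ge_1[of "Suc K", where 'a=real]
      by (intro mult_right_mono divide_left_mono) (simp_all add: N_def)
    also have "\<dots> \<le> \<tau> ^ Suc K * N"
      using power_mono[OF h(2,1), of "Suc K"] by (intro mult_right_mono) (simp_all add: N_def del: power_Suc)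
    finally have "\<bar>w \<bullet> flow A z (a + \<tau> * s l) - (\<Sum>i\<le>K. c i * s l ^ i)\<bar> \<le> \<tau> ^ Suc K * N" .
    moreover have "\<bar>w \<bullet> flow A z (a + \<tau> * s l)\<bar> \<le> \<epsilon> * \<tau> ^ K" using small l by simp
    moreover have "(\<epsilon> + \<tau> * N) * \<tau> ^ K = \<epsilon> * \<tau> ^ K + \<tau> ^ Suc K * N" by (simp add: algebra_simps)
    ultimately show ?thesis by linarith
  qed
  then have "\<bar>c k\<bar> \<le> (5 / \<delta>) ^ K * ((\<epsilon> + \<tau> * N) * \<tau> ^ K)"
    using \<delta> s \<open>k \<le> K\<close> by (intro abs_coeff_le_of_separated_sums) auto
  then have "\<bar>w \<bullet> (mat_pow A k *v flow A z a)\<bar> * \<tau> ^ k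
      \<le> fact k * ((5 / \<delta>) ^ K * (\<epsilon> + \<tau> * N)) * \<tau> ^ K"
    using \<tau> by (simp add: c_def abs_mult field_simps)
  also have "\<dots> \<le> fact K * ((5 / \<delta>) ^ K * (\<epsilon> + \<tau> * N)) * \<tau> ^ k"
  proof -
    have "0 \<le> \<epsilon> * \<tau> ^ K" using small by (auto intro: order.trans[OF abs_ge_zero])
    then have "0 \<le> \<epsilon>" using zero_less_power[OF \<tau>(1), of K] by (auto simp: zero_le_mult_iff)
    then have "0 \<le> (5 / \<delta>) ^ K * (\<epsilon> + \<tau> * N)" using \<delta>(1) \<tau>(1) by (simp add: N_def)
    moreover have "fact k \<le> (fact K :: real)" using \<open>k \<le> K\<close> by (rule fact_mono)
    moreover have "\<tau> ^ K \<le> \<tau> ^ k" using \<tau> \<open>k \<le> K\<close> by (intro power_decreasing) auto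
    ultimately show ?thesis using \<tau>(1) by (intro mult_mono mult_right_mono) simp_all
  qed
  finally show ?thesis
    using \<tau> by (simp add: N_def mult.assoc)
qed

lemma span_kalman_columns_eq_UNIV:
  fixes A :: "real^'n^'n" and B :: "real^'r^'n"
  assumes "controllable A B"
  shows "span (\<Union>k\<in>{0..Kalman_index A B}. columns (mat_pow A k ** B)) = UNIV"
proof -
  have "ctrb_rank A B (Kalman_index A B) = CARD('n)"
    unfolding Kalman_index_def using assms unfolding controllable_def by (rule LeastI)
  then show ?thesis
    by (simp add: ctrb_rank_def dim_span dim_eq_full[symmetric])
qed

lemma inner_mat_pow_skew:
  fixes A :: "real^'n^'n"
  assumes "transpose A = - A"
  shows "w \<bullet> (mat_pow A k *v x) = (-1) ^ k * ((mat_pow A k *v w) \<bullet> x)"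
proof (induction k arbitrary: w)
  case (Suc k)
  have "w \<bullet> (mat_pow A (Suc k) *v x) = (transpose A *v w) \<bullet> (mat_pow A k *v x)"
    by (simp add: mat_pow_Suc_mult_vector transpose_matrix_vector dot_lmul_matrix)
  also have "\<dots> = - ((A *v w) \<bullet> (mat_pow A k *v x))"
    by (simp add: assms matrix_vector_mult_uminus_left)
  also have "\<dots> = - ((-1) ^ k * ((mat_pow A k *v (A *v w)) \<bullet> x))"
    by (simp only: Suc)
  finally show ?case by (simp add: mat_pow_Suc_mult_vector')
qed simp

lemma column_matrix_mult: "column j (M ** B) = M *v column j B"
  by (simp add: vec_eq_iff matrix_matrix_mult_def matrix_vector_mult_def column_def)

text \<open>An l1-version of the observability norm x \<mapsto> |[B, AB, ..., A^K B]^T x|.\<close>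
definition kalman_norm :: "real^'n^'n \<Rightarrow> real^'r^'n \<Rightarrow> nat \<Rightarrow> real^'n \<Rightarrow> real" where
  "kalman_norm A B K x = (\<Sum>k\<le>K. \<Sum>j\<in>UNIV. \<bar>column j B \<bullet> (mat_pow A k *v x)\<bar>)"

lemma kalman_norm_pos:
  fixes A :: "real^'n^'n" and B :: "real^'r^'n"
  assumes skew: "transpose A = - A" and "controllable A B" and "x \<noteq> 0"
  shows "kalman_norm A B (Kalman_index A B) x > 0"
proof (rule ccontr)
  let ?K = "Kalman_index A B"
  assume "\<not> ?thesis"
  moreover have "0 \<le> kalman_norm A B ?K x" by (simp add: kalman_norm_def sum_nonneg)
  ultimately have "kalman_norm A B ?K x = 0" by simp
  then have "\<forall>k\<le>?K. \<forall>j. column j B \<bullet> (mat_pow A k *v x) = 0"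
    by (simp add: kalman_norm_def sum_nonneg_eq_0_iff sum_nonneg)
  then have orth: "orthogonal x y" if "y \<in> (\<Union>k\<in>{0..?K}. columns (mat_pow A k ** B))" for y
  proof -
    from that obtain k j where "k \<le> ?K" "y = mat_pow A k *v column j B"
      by (auto simp: columns_def column_matrix_mult)
    then show ?thesis
      using \<open>\<forall>k\<le>?K. \<forall>j. column j B \<bullet> (mat_pow A k *v x) = 0\<close> inner_mat_pow_skew[OF skew, of "column j B" k x]
      by (simp add: orthogonal_def inner_commute)
  qed
  have "orthogonal x x"
    using span_kalman_columns_eq_UNIV[OF \<open>controllable A B\<close>]
    by (intro orthogonal_to_span[where S="\<Union>k\<in>{0..?K}. columns (mat_pow A k ** B)", OF _ orth]) auto
  then show False using \<open>x \<noteq> 0\<close> by (simp add: orthogonal_def)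
qed

lemma kalman_norm_scaleR: "kalman_norm A B K (c *\<^sub>R x) = \<bar>c\<bar> * kalman_norm A B K x"
  by (simp add: kalman_norm_def matrix_vector_mult_scaleR abs_mult sum_distrib_left)

lemma continuous_on_kalman_norm: "continuous_on S (kalman_norm A B K)"
  unfolding kalman_norm_def
  by (intro continuous_intros bounded_linear.continuous_on[OF matrix_vector_mul_bounded_linear])

text \<open>Positivity on the compact unit sphere and homogeneity.\<close>
lemma kalman_norm_lower_bound:
  fixes A :: "real^'n^'n" and B :: "real^'r^'n"
  assumes "transpose A = - A" and "controllable A B"
  obtains c where "c > 0" "\<And>x. c * norm x \<le> kalman_norm A B (Kalman_index A B) x"
proof -
  let ?\<Phi> = "kalman_norm A B (Kalman_index A B)"
  have "sphere (0::real^'n) 1 \<noteq> {}" by simp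
  then obtain x0 where x0: "x0 \<in> sphere 0 1" "\<And>y. y \<in> sphere 0 1 \<Longrightarrow> ?\<Phi> x0 \<le> ?\<Phi> y"
    using continuous_attains_inf[OF compact_sphere _ continuous_on_kalman_norm] by metis
  have "?\<Phi> x0 * norm x \<le> ?\<Phi> x" for x
  proof (cases "x = 0")
    case False
    then have "?\<Phi> x0 \<le> ?\<Phi> ((1 / norm x) *\<^sub>R x)" by (intro x0(2)) simp
    then show ?thesis using False by (simp add: kalman_norm_scaleR field_simps)
  qed (simp add: kalman_norm_def)
  moreover have "?\<Phi> x0 > 0" using x0(1) by (intro kalman_norm_pos assms) auto
  ultimately show ?thesis using that by blast
qed

lemma transpose_mult_vector_nth: "(transpose B *v v) $ j = column j B \<bullet> v"
  by (simp add: matrix_vector_mult_def transpose_def column_def inner_vec_def mult.commute)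

lemma kalman_norm_flow_le_of_samples:
  fixes A :: "real^'n^'n" and B :: "real^'r^'n"
  assumes skew: "transpose A = - A"
    and C: "\<And>v. norm (mat_pow A (Suc K) *v v) \<le> C * norm v"
    and \<delta>: "0 < \<delta>" "\<delta> \<le> 1" and \<tau>: "0 < \<tau>" "\<tau> \<le> 1"
    and s: "\<forall>l\<le>K. 0 \<le> s l \<and> s l \<le> 1" "\<forall>l<K. s l + \<delta> \<le> s (Suc l)"
    and small: "\<forall>l\<le>K. norm (transpose B *v flow A z (a + \<tau> * s l)) \<le> \<epsilon> * \<tau> ^ K"
  shows "kalman_norm A B K (flow A z a)
    \<le> real (Suc K) * CARD('r) * fact K * (5 / \<delta>) ^ K * (\<epsilon> + \<tau> * (\<Sum>j\<in>UNIV. norm (column j B)) * C * norm z)"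
proof -
  define \<beta> where "\<beta> = (\<Sum>j\<in>UNIV. norm (column j B))"
  have each: "\<bar>column j B \<bullet> (mat_pow A k *v flow A z a)\<bar>
      \<le> fact K * (5 / \<delta>) ^ K * (\<epsilon> + \<tau> * \<beta> * C * norm z)" if "k \<le> K" for j k
  proof -
    have "\<bar>column j B \<bullet> flow A z (a + \<tau> * s l)\<bar> \<le> \<epsilon> * \<tau> ^ K" if "l \<le> K" for l
    proof -
      have "\<bar>column j B \<bullet> flow A z (a + \<tau> * s l)\<bar> = \<bar>(transpose B *v flow A z (a + \<tau> * s l)) $ j\<bar>"
        by (simp only: transpose_mult_vector_nth)
      also have "\<dots> \<le> norm (transpose B *v flow A z (a + \<tau> * s l))"
        by (rule component_le_norm_cart)
      finally show ?thesis using small that by auto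
    qed
    then have "\<bar>column j B \<bullet> (mat_pow A k *v flow A z a)\<bar>
        \<le> fact K * (5 / \<delta>) ^ K * (\<epsilon> + \<tau> * (norm (column j B) * norm (mat_pow A (Suc K) *v z)))"
      using \<open>k \<le> K\<close> by (intro abs_inner_mat_pow_flow_le_of_samples[OF skew \<delta> \<tau> s]) auto
    also have "\<dots> \<le> fact K * (5 / \<delta>) ^ K * (\<epsilon> + \<tau> * \<beta> * C * norm z)"
    proof -
      have "norm (column j B) \<le> \<beta>" unfolding \<beta>_def by (rule member_le_sum) auto
      moreover have "0 \<le> C * norm z" using C[of z] norm_ge_zero[of "mat_pow A (Suc K) *v z"] by linarith
      ultimately have "norm (column j B) * norm (mat_pow A (Suc K) *v z) \<le> \<beta> * (C * norm z)"
        using C[of z] norm_ge_zero[of "column j B"] sum_nonneg[of UNIV "\<lambda>j. norm (column j B)"]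
        by (intro mult_mono) (auto simp: \<beta>_def)
      then show ?thesis using \<delta>(1) \<tau>(1) by (intro mult_left_mono add_left_mono) (simp_all add: mult.assoc)
    qed
    finally show ?thesis .
  qed
  have "kalman_norm A B K (flow A z a)
      \<le> (\<Sum>k\<le>K. \<Sum>j\<in>(UNIV::'r set). fact K * (5 / \<delta>) ^ K * (\<epsilon> + \<tau> * \<beta> * C * norm z))"
    unfolding kalman_norm_def by (intro sum_mono each) simp
  then show ?thesis by (simp add: \<beta>_def algebra_simps)
qed

lemma spaced_selection:
  assumes "finite (S::nat set)" "2 * K + 2 \<le> card S"
  obtains f where "\<forall>l\<le>K. f l \<in> S" "\<forall>l<K. f l + 2 \<le> f (Suc l)"
proof -
  define xs where "xs = sorted_list_of_set S"
  have xs: "length xs = card S" "sorted_wrt (<) xs" "set xs = S"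
    using assms(1) by (simp_all add: xs_def)
  have "\<forall>l\<le>K. xs ! (2 * l) \<in> S"
    using xs(1,3) assms(2) by (auto intro: nth_mem)
  moreover have "xs ! (2 * l) + 2 \<le> xs ! (2 * Suc l)" if "l < K" for l
    using sorted_wrt_nth_less[OF xs(2), of "2 * l" "2 * l + 1"]
      sorted_wrt_nth_less[OF xs(2), of "2 * l + 1" "2 * Suc l"] xs(1) assms(2) that
    by auto
  ultimately show ?thesis using that[of "\<lambda>l. xs ! (2 * l)"] by blast
qed

text \<open>Choosing every other one of 2K + 2 cells of width 1/P keeps the chosen points 1/P apart.\<close>
lemma separated_points_in_cells:
  assumes "1 \<le> P" "S \<subseteq> {..<P}" "2 * K + 2 \<le> card S"
    and "\<And>p. p \<in> S \<Longrightarrow> \<exists>s\<in>{real p / real P .. real (Suc p) / real P}. Q s"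
  obtains s where "\<forall>l\<le>K. 0 \<le> s l \<and> s l \<le> 1 \<and> Q (s l)" "\<forall>l<K. s l + 1 / real P \<le> s (Suc l)"
proof -
  obtain f where f: "\<forall>l\<le>K. f l \<in> S" "\<forall>l<K. f l + 2 \<le> f (Suc l)"
    using spaced_selection[of S K] assms(2,3) finite_subset by blast
  have "\<forall>l. \<exists>x. l \<le> K \<longrightarrow> x \<in> {real (f l) / real P .. real (Suc (f l)) / real P} \<and> Q x"
    using assms(4) f(1) by blast
  then obtain s where s: "\<And>l. l \<le> K \<Longrightarrow> s l \<in> {real (f l) / real P .. real (Suc (f l)) / real P} \<and> Q (s l)"
    by metis
  have P: "real P > 0" using assms(1) by simp
  have "0 \<le> s l \<and> s l \<le> 1 \<and> Q (s l)" if "l \<le> K" for l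
  proof -
    have "real (Suc (f l)) \<le> real P" using f(1) that assms(2) by (auto simp: Suc_le_eq)
    then have "real (Suc (f l)) / real P \<le> 1" using P by simp
    moreover have "0 \<le> real (f l) / real P" by simp
    ultimately show ?thesis using s[OF that] by (meson atLeastAtMost_iff order.trans)
  qed
  moreover have "s l + 1 / real P \<le> s (Suc l)" if "l < K" for l
  proof -
    have "f l + 2 \<le> f (Suc l)" using f(2) that by simp
    then have "real (Suc (f l)) + 1 \<le> real (f (Suc l))" by linarith
    then have "real (Suc (f l)) / real P + 1 / real P \<le> real (f (Suc l)) / real P"
      using P by (simp add: divide_right_mono add_divide_distrib[symmetric])
    then show ?thesis using s[of l] s[of "Suc l"] that by auto
  qed
  ultimately show ?thesis using that by blast
qed

lemma few_bad_cells:
  fixes A :: "real^'n^'n" and B :: "real^'r^'n"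
  assumes skew: "transpose A = - A" and ctrl: "controllable A B" and P: "1 \<le> P"
  obtains \<eta> \<tau>0 where "0 < \<eta>" "0 < \<tau>0"
    "\<And>\<tau> a z. 0 < \<tau> \<Longrightarrow> \<tau> \<le> \<tau>0 \<Longrightarrow>
       card {p\<in>{..<P}. \<exists>s\<in>{real p / real P .. real (Suc p) / real P}.
         norm (transpose B *v flow A z (a + \<tau> * s)) < \<eta> * \<tau> ^ Kalman_index A B * norm z}
       \<le> 2 * Kalman_index A B + 1"
proof -
  define K where "K = Kalman_index A B"
  obtain c0 where c0: "c0 > 0" "\<And>x. c0 * norm x \<le> kalman_norm A B K x"
    using kalman_norm_lower_bound[OF skew ctrl] unfolding K_def by blast
  obtain C where C: "C > 0" "\<And>v. norm (mat_pow A (Suc K) *v v) \<le> C * norm v"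
    using bounded_linear.pos_bounded[OF matrix_vector_mul_bounded_linear[of "mat_pow A (Suc K)"]]
    by (auto simp: mult.commute)
  define \<beta> where "\<beta> = (\<Sum>j\<in>UNIV. norm (column j B))"
  have \<beta>: "0 \<le> \<beta>" by (simp add: \<beta>_def sum_nonneg)
  (* If K + 1 separated cells are bad, E (\<eta> + \<tau> \<beta> C) |z| bounds the Kalman norm of e^{aA} z;
     \<eta> and \<tau>0 are chosen to make this at most c0 |z| / 2. *)
  define E where "E = real (Suc K) * CARD('r) * fact K * (5 / (1 / real P)) ^ K"
  have E: "0 < E" using P by (simp add: E_def)
  define \<eta> where "\<eta> = c0 / (4 * E)"
  define \<tau>0 where "\<tau>0 = min 1 (c0 / (4 * E * (\<beta> * C + 1)))"
  have "0 \<le> \<beta> * C" using \<beta> C(1) by simp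
  then have "0 < \<eta>" "0 < \<tau>0" using c0 E by (simp_all add: \<eta>_def \<tau>0_def)
  moreover have "card {p\<in>{..<P}. \<exists>s\<in>{real p / real P .. real (Suc p) / real P}.
      norm (transpose B *v flow A z (a + \<tau> * s)) < \<eta> * \<tau> ^ K * norm z} \<le> 2 * K + 1" (is "card ?S \<le> _")
    if \<tau>: "0 < \<tau>" "\<tau> \<le> \<tau>0" for \<tau> a z
  proof (rule ccontr)
    assume "\<not> ?thesis"
    obtain s where s: "\<forall>l\<le>K. 0 \<le> s l \<and> s l \<le> 1 \<and>
        norm (transpose B *v flow A z (a + \<tau> * s l)) < \<eta> * \<tau> ^ K * norm z"
        "\<forall>l<K. s l + 1 / real P \<le> s (Suc l)"
    proof (rule separated_points_in_cells[OF P, of ?S K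
          "\<lambda>s. norm (transpose B *v flow A z (a + \<tau> * s)) < \<eta> * \<tau> ^ K * norm z"])
      show "2 * K + 2 \<le> card ?S" using \<open>\<not> card ?S \<le> 2 * K + 1\<close> by simp
    qed auto
    then have "0 < \<eta> * \<tau> ^ K * norm z" by (meson le0 norm_ge_zero order.strict_trans1)
    then have z: "0 < norm z" using \<open>0 < \<eta>\<close> \<tau>(1) by (simp add: zero_less_mult_iff)
    have "\<tau> \<le> 1" using \<tau> by (simp add: \<tau>0_def)
    have small: "\<forall>l\<le>K. norm (transpose B *v flow A z (a + \<tau> * s l)) \<le> (\<eta> * norm z) * \<tau> ^ K"
      using s(1) by (simp add: less_imp_le mult_ac)
    have "c0 * norm z \<le> kalman_norm A B K (flow A z a)"
      using c0(2) norm_flow[OF skew] by metis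
    also have "\<dots> \<le> E * (\<eta> * norm z + \<tau> * \<beta> * C * norm z)"
      using kalman_norm_flow_le_of_samples[OF skew C(2) _ _ \<tau>(1) \<open>\<tau> \<le> 1\<close> _ s(2) small] s(1) P
      by (simp add: E_def \<beta>_def)
    also have "\<dots> = (E * \<eta> + E * (\<tau> * (\<beta> * C))) * norm z" by (simp add: algebra_simps)
    also have "\<dots> \<le> (c0 / 4 + c0 / 4) * norm z"
    proof (intro mult_right_mono add_mono)
      show "E * \<eta> \<le> c0 / 4" using E by (simp add: \<eta>_def)
      have "\<tau> * (\<beta> * C) \<le> \<tau> * (\<beta> * C + 1)" using \<tau>(1) by simp
      also have "\<dots> \<le> c0 / (4 * E * (\<beta> * C + 1)) * (\<beta> * C + 1)"
        using \<tau> \<open>0 \<le> \<beta> * C\<close> by (intro mult_right_mono) (auto simp: \<tau>0_def)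
      also have "\<dots> = c0 / (4 * E)" using \<open>0 \<le> \<beta> * C\<close> by simp
      finally show "E * (\<tau> * (\<beta> * C)) \<le> c0 / 4" using E by (simp add: field_simps)
    qed simp
    finally show False using c0(1) z by (simp add: field_simps)
  qed
  ultimately show ?thesis using that unfolding K_def by blast
qed

lemma Linf01_mult_integrable:
  assumes "Linf01 T \<alpha>" "continuous_on {0..T} g"
  shows "(\<lambda>t. \<alpha> t * g t) integrable_on {0..T}"
proof -
  obtain B where B: "\<And>t. t \<in> {0..T} \<Longrightarrow> norm (g t) \<le> B"
    using continuous_on_compact_bound[OF compact_Icc assms(2)] by blast
  have "\<alpha> \<in> borel_measurable (lebesgue_on {0..T})"
    using assms(1) by (simp add: Linf01_def measurable_on_iff_borel_measurable)
  moreover have "g \<in> borel_measurable (lebesgue_on {0..T})"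
    by (rule continuous_imp_measurable_on_sets_lebesgue[OF assms(2)]) simp
  ultimately have "(\<lambda>t. \<alpha> t * g t) \<in> borel_measurable (lebesgue_on {0..T})"
    by (rule borel_measurable_times)
  moreover have "norm (\<alpha> t * g t) \<le> B" if "t \<in> {0..T}" for t
  proof -
    have \<alpha>1: "\<bar>\<alpha> t\<bar> \<le> 1" using assms(1) that by (simp add: Linf01_def)
    show ?thesis using mult_mono[OF \<alpha>1 B[OF that]] by (simp add: abs_mult)
  qed
  ultimately show ?thesis
    by (rule measurable_bounded_by_integrable_imp_integrable[OF _ integrable_const_ivl]) simp_all
qed

text \<open>Integrate L \<alpha> - L cnt \<le> \<alpha> h, where cnt t counts the intervals containing t.\<close>
lemma weighted_integral_ge_outside_intervals:
  fixes \<alpha> h :: "real \<Rightarrow> real"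
  assumes \<alpha>: "Linf01 T \<alpha>" and h: "continuous_on {0..T} h" "\<And>t. t \<in> {0..T} \<Longrightarrow> 0 \<le> h t"
    and L: "0 \<le> L" and I: "finite I" "\<And>i. i \<in> I \<Longrightarrow> 0 \<le> c i \<and> c i \<le> d i \<and> d i \<le> T"
    and cover: "\<And>t. t \<in> {0..T} \<Longrightarrow> h t < L \<Longrightarrow> \<exists>i\<in>I. t \<in> {c i..d i}"
  shows "L * (integral {0..T} \<alpha> - (\<Sum>i\<in>I. d i - c i)) \<le> integral {0..T} (\<lambda>t. \<alpha> t * h t)"
proof -
  define cnt where "cnt t = (\<Sum>i\<in>I. if t \<in> {c i..d i} then 1 else (0::real))" for t
  have ind: "((\<lambda>t. if t \<in> {c i..d i} then 1 else (0::real)) has_integral (d i - c i)) {0..T}"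
    if "i \<in> I" for i
  proof -
    have "((\<lambda>_. 1::real) has_integral (d i - c i)) {c i..d i}"
      using has_integral_const_real[of "1::real" "c i" "d i"] I(2)[OF that] by simp
    moreover have "{c i..d i} \<inter> {0..T} = {c i..d i}" using I(2)[OF that] by auto
    ultimately show ?thesis by (subst has_integral_restrict_Int) (simp only:)
  qed
  have cnt: "(cnt has_integral (\<Sum>i\<in>I. d i - c i)) {0..T}"
    unfolding cnt_def by (rule has_integral_sum[OF I(1) ind])
  have \<alpha>_int: "\<alpha> integrable_on {0..T}"
    using Linf01_mult_integrable[OF \<alpha> continuous_on_const[of _ 1]] by simp
  have pointwise: "L * \<alpha> t - L * cnt t \<le> \<alpha> t * h t" if t: "t \<in> {0..T}" for t
  proof (cases "\<exists>i\<in>I. t \<in> {c i..d i}")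
    case True
    then obtain i where i: "i \<in> I" "t \<in> {c i..d i}" by blast
    have "(if t \<in> {c i..d i} then 1 else (0::real)) \<le> cnt t"
      unfolding cnt_def by (rule member_le_sum[OF i(1) _ I(1)]) simp
    then have "1 \<le> cnt t" using i(2) by simp
    moreover have "\<alpha> t \<le> 1" using \<alpha> t by (simp add: Linf01_def)
    ultimately have "L * \<alpha> t \<le> L * cnt t"
      using L by (intro mult_left_mono) auto
    moreover have "0 \<le> \<alpha> t * h t" using \<alpha> t h(2)[OF t] by (simp add: Linf01_def)
    ultimately show ?thesis by linarith
  next
    case False
    then have "L \<le> h t" using cover[OF t] not_less by blast
    moreover have "0 \<le> \<alpha> t" using \<alpha> t by (simp add: Linf01_def)
    ultimately have "L * \<alpha> t \<le> h t * \<alpha> t" by (rule mult_right_mono)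
    moreover have "0 \<le> L * cnt t" using L by (simp add: cnt_def sum_nonneg)
    ultimately show ?thesis by (simp add: mult.commute)
  qed
  have "((\<lambda>t. L * \<alpha> t - L * cnt t)
      has_integral (L * integral {0..T} \<alpha> - L * (\<Sum>i\<in>I. d i - c i))) {0..T}"
    by (intro has_integral_diff has_integral_mult_right cnt integrable_integral \<alpha>_int)
  from has_integral_le[OF this integrable_integral[OF Linf01_mult_integrable[OF \<alpha> h(1)]] pointwise]
  show ?thesis by (simp only: right_diff_distrib)
qed

lemma cell_containing:
  assumes "0 < \<sigma>" "0 < M" "0 \<le> t" "t \<le> \<sigma> * real M"
  obtains i where "i < M" "t \<in> {\<sigma> * real i .. \<sigma> * real (Suc i)}"
proof -
  define i where "i = min (nat \<lfloor>t / \<sigma>\<rfloor>) (M - 1)"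
  have "i < M" using assms(2) by (simp add: i_def)
  moreover have "\<sigma> * real i \<le> t"
  proof -
    have "real i \<le> t / \<sigma>" using assms(1,3) by (simp add: i_def min_def) linarith
    then show ?thesis using assms(1) by (simp add: field_simps)
  qed
  moreover have "t \<le> \<sigma> * real (Suc i)"
  proof (cases "nat \<lfloor>t / \<sigma>\<rfloor> \<le> M - 1")
    case True
    then have "t / \<sigma> \<le> real (Suc i)" using assms(1,3) by (simp add: i_def) linarith
    then show ?thesis using assms(1) by (simp add: field_simps)
  next
    case False
    then have "Suc i = M" using assms(2) by (simp add: i_def)
    then show ?thesis using assms(4) by simp
  qed
  ultimately show ?thesis using that by simp
qed

text \<open>Cell i of width \<tau>/P is cell i mod P of window i div P of width \<tau>.\<close>
lemma card_cells_le_of_windows: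
  fixes Q :: "real \<Rightarrow> bool"
  assumes "0 < \<tau>" "1 \<le> P"
    and window: "\<And>b. b < n \<Longrightarrow>
      card {p\<in>{..<P}. \<exists>s\<in>{real p / real P .. real (Suc p) / real P}. Q (\<tau> * real b + \<tau> * s)} \<le> m"
  shows "card {i\<in>{..<n * P}. \<exists>t\<in>{\<tau> / P * real i .. \<tau> / P * real (Suc i)}. Q t} \<le> n * m"
proof -
  define W where "W b = {p\<in>{..<P}. \<exists>s\<in>{real p / real P .. real (Suc p) / real P}. Q (\<tau> * real b + \<tau> * s)}" for b
  have "{i\<in>{..<n * P}. \<exists>t\<in>{\<tau> / P * real i .. \<tau> / P * real (Suc i)}. Q t}
      \<subseteq> (\<Union>b<n. (\<lambda>p. b * P + p) ` W b)"
  proof safe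
    fix i t assume i: "i < n * P" and t: "t \<in> {\<tau> / P * real i .. \<tau> / P * real (Suc i)}" "Q t"
    define b p where "b = i div P" and "p = i mod P"
    have i_eq: "i = b * P + p" by (simp add: b_def p_def)
    have "b < n" using i assms(2) by (simp add: b_def less_mult_imp_div_less)
    moreover have "p < P" using assms(2) by (simp add: p_def)
    moreover have "(t - \<tau> * real b) / \<tau> \<in> {real p / real P .. real (Suc p) / real P}"
      using t(1) assms(1,2) unfolding i_eq by (auto simp: field_simps)
    moreover have "Q (\<tau> * real b + \<tau> * ((t - \<tau> * real b) / \<tau>))" using t(2) assms(1) by simp
    ultimately show "i \<in> (\<Union>b<n. (\<lambda>p. b * P + p) ` W b)"
      unfolding i_eq W_def by blast
  qed
  then have "card {i\<in>{..<n * P}. \<exists>t\<in>{\<tau> / P * real i .. \<tau> / P * real (Suc i)}. Q t}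
      \<le> card (\<Union>b<n. (\<lambda>p. b * P + p) ` W b)"
    by (intro card_mono) (auto simp: W_def)
  also have "\<dots> \<le> (\<Sum>b<n. card ((\<lambda>p. b * P + p) ` W b))" by (rule card_UN_le) simp
  also have "\<dots> \<le> (\<Sum>b<n. m)"
  proof (intro sum_mono order.trans[OF card_image_le])
    fix b assume "b \<in> {..<n}"
    then show "card (W b) \<le> m" unfolding W_def by (intro window) simp
  qed (simp add: W_def)
  finally show ?thesis by simp
qed

lemma weighted_integral_ge_few_bad_cells:
  fixes y :: "real \<Rightarrow> 'a::real_normed_vector" and n P m :: nat
  assumes \<alpha>: "Linf01 T \<alpha>" and y: "continuous_on {0..T} y"
    and T: "0 < T" and n: "1 \<le> n" and P: "1 \<le> P" and \<epsilon>: "0 \<le> \<epsilon>"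
    and few: "\<And>b. b < n \<Longrightarrow> card {p\<in>{..<P}. \<exists>s\<in>{real p / real P .. real (Suc p) / real P}.
      norm (y (T / n * real b + T / n * s)) < \<epsilon>} \<le> m"
  shows "\<epsilon>\<^sup>2 * (integral {0..T} \<alpha> - real m * T / real P)
    \<le> integral {0..T} (\<lambda>t. \<alpha> t * (norm (y t))\<^sup>2)"
proof -
  define \<sigma> where "\<sigma> = T / n / P"
  have \<sigma>: "0 < \<sigma>" "\<sigma> * real (n * P) = T" using T n P by (simp_all add: \<sigma>_def)
  define Bad where "Bad = {i\<in>{..<n * P}. \<exists>t\<in>{\<sigma> * real i .. \<sigma> * real (Suc i)}. norm (y t) < \<epsilon>}"
  have "card Bad \<le> n * m"
    unfolding Bad_def \<sigma>_def using T n P few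
    by (intro card_cells_le_of_windows[of "T / n" P n "\<lambda>t. norm (y t) < \<epsilon>" m]) auto
  then have "(\<Sum>i\<in>Bad. \<sigma> * real (Suc i) - \<sigma> * real i) \<le> real m * T / real P"
    using \<sigma> n P by (simp add: \<sigma>_def algebra_simps) (simp add: field_simps flip: of_nat_mult)
  then have "\<epsilon>\<^sup>2 * (integral {0..T} \<alpha> - real m * T / real P)
      \<le> \<epsilon>\<^sup>2 * (integral {0..T} \<alpha> - (\<Sum>i\<in>Bad. \<sigma> * real (Suc i) - \<sigma> * real i))"
    by (intro mult_left_mono) auto
  also have "\<dots> \<le> integral {0..T} (\<lambda>t. \<alpha> t * (norm (y t))\<^sup>2)"
  proof (rule weighted_integral_ge_outside_intervals[OF \<alpha>])
    show "continuous_on {0..T} (\<lambda>t. (norm (y t))\<^sup>2)" by (intro continuous_intros y)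
    show "0 \<le> \<sigma> * real i \<and> \<sigma> * real i \<le> \<sigma> * real (Suc i) \<and> \<sigma> * real (Suc i) \<le> T"
      if "i \<in> Bad" for i
    proof -
      have "real (Suc i) \<le> real (n * P)" using that by (simp add: Bad_def Suc_le_eq del: of_nat_mult)
      then have "\<sigma> * real (Suc i) \<le> T" using \<sigma> mult_left_mono[of _ _ \<sigma>] by fastforce
      then show ?thesis using \<sigma>(1) by simp
    qed
    show "\<exists>i\<in>Bad. t \<in> {\<sigma> * real i .. \<sigma> * real (Suc i)}"
      if "t \<in> {0..T}" "(norm (y t))\<^sup>2 < \<epsilon>\<^sup>2" for t
    proof -
      have "0 < n * P" "0 \<le> t" "t \<le> \<sigma> * real (n * P)" using that(1) n P \<sigma>(2) by auto
      then obtain i where "i < n * P" "t \<in> {\<sigma> * real i .. \<sigma> * real (Suc i)}"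
        by (rule cell_containing[OF \<sigma>(1)])
      moreover have "norm (y t) < \<epsilon>" using that(2) \<epsilon> by (simp add: power_less_imp_less_base)
      ultimately show ?thesis unfolding Bad_def by blast
    qed
  qed (simp_all add: Bad_def)
  finally show ?thesis .
qed

lemma continuous_on_observation: "continuous_on S (\<lambda>t. transpose B *v flow A z t)"
proof -
  have "(\<lambda>t. transpose B *v flow A z t) = (\<lambda>t. \<chi> j. column j B \<bullet> flow A z t)"
    by (simp only: fun_eq_iff vec_eq_iff vec_lambda_beta transpose_mult_vector_nth) simp
  then show ?thesis
    unfolding \<open>(\<lambda>t. transpose B *v flow A z t) = _\<close>
    by (intro continuous_on_vec_lambda continuous_on_inner_flow)
qed

lemma weighted_observation_integral_ge:
  fixes A :: "real^'n^'n" and B :: "real^'r^'n" and n P m :: nat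
  assumes few: "\<And>\<tau> a z. 0 < \<tau> \<Longrightarrow> \<tau> \<le> \<tau>0 \<Longrightarrow>
       card {p\<in>{..<P}. \<exists>s\<in>{real p / real P .. real (Suc p) / real P}.
         norm (transpose B *v flow A z (a + \<tau> * s)) < \<eta> * \<tau> ^ K * norm z} \<le> m"
    and "1 \<le> P" "1 \<le> n" "1 / real n \<le> \<tau>0" "0 \<le> \<eta>"
    and T: "0 < T" "T \<le> 1" and \<alpha>: "Linf01 T \<alpha>"
  shows "(\<eta> * (T / real n) ^ K * norm z)\<^sup>2 * (integral {0..T} \<alpha> - real m * T / real P)
    \<le> integral {0..T} (\<lambda>t. \<alpha> t * (norm (transpose B *v (mat_exp (t *\<^sub>R A) *v z)))\<^sup>2)"
proof -
  have "0 < T / real n" "T / real n \<le> \<tau>0"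
    using T assms(3,4) divide_right_mono[OF T(2), of "real n"] by auto
  moreover have "0 \<le> \<eta> * (T / real n) ^ K * norm z" using assms(5) T(1) by simp
  ultimately show ?thesis
    using weighted_integral_ge_few_bad_cells[where y="\<lambda>t. transpose B *v flow A z t",
        OF \<alpha> continuous_on_observation T(1) assms(3,2) _ few]
    by (simp only: mat_exp_mult_vector)
qed

theorem proposition5p1:
  fixes A :: "real^'n^'n" and B :: "real^'r^'n" and \<rho> :: real
  assumes skew: "transpose A = - A"
    and ctrl: "controllable A B"
    and rho: "\<rho> > 0"
  shows "\<exists>\<kappa>>0. \<forall>T \<alpha>. 0 < T \<and> T \<le> 1 \<and> Linf01 T \<alpha> \<and> integral {0..T} \<alpha> \<ge> \<rho> * T \<longrightarrow>
           class_K A B T (\<kappa> * T ^ (2 * Kalman_index A B + 1)) \<alpha>"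
proof -
  define K where "K = Kalman_index A B"
  obtain P :: nat where "0 < P" "inverse (real P) < \<rho> / (2 * (2 * K + 1))"
    using ex_inverse_of_nat_less[of "\<rho> / (2 * (2 * K + 1))"] rho by auto
  then have P: "1 \<le> P" "real (2 * K + 1) / real P \<le> \<rho> / 2"
    by (simp_all add: field_simps)
  obtain \<eta> \<tau>0 where \<eta>: "0 < \<eta>" "0 < \<tau>0" and few: "\<And>\<tau> a z. 0 < \<tau> \<Longrightarrow> \<tau> \<le> \<tau>0 \<Longrightarrow>
       card {p\<in>{..<P}. \<exists>s\<in>{real p / real P .. real (Suc p) / real P}.
         norm (transpose B *v flow A z (a + \<tau> * s)) < \<eta> * \<tau> ^ K * norm z} \<le> 2 * K + 1"
    using few_bad_cells[OF skew ctrl P(1)] unfolding K_def by blast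
  obtain n :: nat where "0 < n" "inverse (real n) < \<tau>0"
    using ex_inverse_of_nat_less[OF \<eta>(2)] by auto
  then have n: "1 \<le> n" "1 / real n \<le> \<tau>0" by (simp_all add: inverse_eq_divide)
  define \<kappa> where "\<kappa> = \<eta>\<^sup>2 / real n ^ (2 * K) * (\<rho> / 2)"
  have "\<kappa> * T ^ (2 * K + 1) * (norm z)\<^sup>2
      \<le> integral {0..T} (\<lambda>t. \<alpha> t * (norm (transpose B *v (mat_exp (t *\<^sub>R A) *v z)))\<^sup>2)"
    if T: "0 < T" "T \<le> 1" and \<alpha>: "Linf01 T \<alpha>" "\<rho> * T \<le> integral {0..T} \<alpha>" for T \<alpha> z
  proof -
    have "\<kappa> * T ^ (2 * K + 1) * (norm z)\<^sup>2 = (\<eta> * (T / real n) ^ K * norm z)\<^sup>2 * (\<rho> * T / 2)"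
      by (simp add: \<kappa>_def power_mult_distrib power_divide power_mult[symmetric]
          mult.commute mult.left_commute)
    also have "\<dots> \<le> (\<eta> * (T / real n) ^ K * norm z)\<^sup>2 * (integral {0..T} \<alpha> - real (2 * K + 1) * T / real P)"
      using \<alpha>(2) mult_right_mono[OF P(2), of T] T(1) by (intro mult_left_mono) simp_all
    also have "\<dots> \<le> integral {0..T} (\<lambda>t. \<alpha> t * (norm (transpose B *v (mat_exp (t *\<^sub>R A) *v z)))\<^sup>2)"
      by (rule weighted_observation_integral_ge[OF few P(1) n less_imp_le[OF \<eta>(1)] T \<alpha>(1)])
    finally show ?thesis .
  qed
  moreover have "\<kappa> > 0" using \<eta>(1) n(1) rho by (simp add: \<kappa>_def)
  ultimately show ?thesis unfolding class_K_def K_def by blast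
qed

end
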